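(* Let $q>1$ and $p$ with $\frac1p+\frac1q=1$, and set $r=(2-\frac1q)p$. If $\nu,\mu$ are probability measures on $\mathbb{R}$ (with the relevant moments finite), then $$W_2(\nu,\mu)\le W_1^{\frac1{2q}}(\nu,\mu)\,W_r^{1-\frac1{2q}}(\nu,\mu).$$ Moreover, for each $n$ there is a constant $c(n)$ such that if $\nu_i,\mu_i$, $i=1,\dots,n$, are probability measures on $\mathbb{R}$, then $$W_2\Big(\bigotimes_{i=1}^n\nu_i,\bigotimes_{i=1}^n\mu_i\Big)\le c(n)\,W_1^{\frac1{2q}}\Big(\bigotimes_{i=1}^n\nu_i,\bigotimes_{i=1}^n\mu_i\Big)\,W_r^{1-\frac1{2q}}\Big(\bigotimes_{i=1}^n\nu_i,\bigotimes_{i=1}^n\mu_i\Big).$$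
   Context: For $s\ge1$, $W_s(\nu,\mu)=\big(\inf_\pi\int|x-y|^s\pi(dx,dy)\big)^{1/s}$, the infimum over couplings $\pi$ of $\nu$ and $\mu$. *)

theory Defs
  imports "HOL-Probability.Probability"
begin

definition couplings :: "'a measure \<Rightarrow> 'b measure \<Rightarrow> ('a \<times> 'b) measure set" where
  "couplings M N = {\<pi>. prob_space \<pi> \<and> sets \<pi> = sets (M \<Otimes>\<^sub>M N)
      \<and> distr \<pi> M fst = M \<and> distr \<pi> N snd = N}"

text \<open>The infimum is taken in
  the extended nonnegative reals; it is finite whenever the relevant moments are.\<close>
definition wasserstein :: "('a \<Rightarrow> 'a \<Rightarrow> real) \<Rightarrow> real \<Rightarrow> 'a measure \<Rightarrow> 'a measure \<Rightarrow> real" where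
  "wasserstein d s M N =
     (enn2real (INF \<pi> \<in> couplings M N. \<integral>\<^sup>+ z. ennreal (d (fst z) (snd z) powr s) \<partial>\<pi>)) powr (1 / s)"

definition W_real :: "real \<Rightarrow> real measure \<Rightarrow> real measure \<Rightarrow> real" where
  "W_real s = wasserstein (\<lambda>x y. \<bar>x - y\<bar>) s"

definition eucl_dist :: "nat \<Rightarrow> (nat \<Rightarrow> real) \<Rightarrow> (nat \<Rightarrow> real) \<Rightarrow> real" where
  "eucl_dist n x y = sqrt (\<Sum>i<n. (x i - y i)\<^sup>2)"

definition W_eucl :: "nat \<Rightarrow> real \<Rightarrow> (nat \<Rightarrow> real) measure \<Rightarrow> (nat \<Rightarrow> real) measure \<Rightarrow> real" where
  "W_eucl n s = wasserstein (eucl_dist n) s"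

definition finite_moment :: "real \<Rightarrow> real measure \<Rightarrow> bool" where
  "finite_moment s M \<longleftrightarrow> (\<integral>\<^sup>+ x. ennreal (\<bar>x\<bar> powr s) \<partial>M) < \<infinity>"

definition real_prob :: "real measure \<Rightarrow> bool" where
  "real_prob M \<longleftrightarrow> prob_space M \<and> sets M = sets borel"

end

(* On the real line the quantile coupling, which transports the quantile function of nu onto
   that of mu, is optimal for every cost |x - y|^s with s >= 1.  Indeed |x - y|^s is an integral,
   against a nonnegative kernel, of the indicators of the "crossings" {x <= a, b < y} and
   {y <= a, b < x}; so the cost of any coupling is an integral of crossing probabilities, each of
   which is at least (F_nu a - F_mu b)^+ (resp. (F_mu a - F_nu b)^+), and the quantile coupling
   attains all these lower bounds at once.  Hence W_2^2 is the quadratic cost of the quantile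
   coupling, and Hoelder's inequality with exponents q and p applied to
   |x - y|^2 = |x - y|^(1/q) |x - y|^(2 - 1/q) gives W_2^2 <= W_1^(1/q) W_r^(2 - 1/q).

   For product measures, the product of the coordinatewise quantile couplings has quadratic cost
   sum_i W_2(nu_i, mu_i)^2, while W_s(nu_i, mu_i) <= W_s(prod nu, prod mu) because the coordinate
   projections are 1-Lipschitz.  Summing the one-dimensional bounds gives the inequality with
   c(n) = sqrt n. *)

theory Submission
  imports Defs
begin

abbreviation transport_cost :: "('a \<Rightarrow> 'a \<Rightarrow> real) \<Rightarrow> real \<Rightarrow> ('a \<times> 'a) measure \<Rightarrow> ennreal" where
  "transport_cost d s \<pi> \<equiv> \<integral>\<^sup>+ z. ennreal (d (fst z) (snd z) powr s) \<partial>\<pi>"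

lemma wasserstein_le_transport_cost:
  assumes "\<pi> \<in> couplings M N" "transport_cost d s \<pi> < \<infinity>" "s > 0"
  shows "wasserstein d s M N \<le> enn2real (transport_cost d s \<pi>) powr (1 / s)"
  unfolding wasserstein_def
  by (intro powr_mono2 enn2real_mono INF_lower assms) (use assms in auto)

lemma W_real_nonneg: "W_real s M N \<ge> 0"
  by (simp add: W_real_def wasserstein_def)

lemma W_eucl_nonneg: "W_eucl n s M N \<ge> 0"
  by (simp add: W_eucl_def wasserstein_def)

lemma powr_le_1_plus_powr:
  fixes x :: real
  assumes "x \<ge> 0" "0 \<le> t" "t \<le> s"
  shows "x powr t \<le> 1 + x powr s"
proof (cases "x \<le> 1")
  case True
  then have "x powr t \<le> 1"
    using assms by (cases "x = 0") (auto intro: powr_le1)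
  then show ?thesis by (simp add: add_increasing2)
next
  case False
  then show ?thesis using assms by (simp add: add_increasing powr_mono)
qed

lemma nn_integral_powr_finite_mono:
  assumes "prob_space M" and [measurable]: "f \<in> borel_measurable M" and "\<And>x. f x \<ge> 0"
    and "0 \<le> t" "t \<le> s" and "(\<integral>\<^sup>+ x. ennreal (f x powr s) \<partial>M) < \<infinity>"
  shows "(\<integral>\<^sup>+ x. ennreal (f x powr t) \<partial>M) < \<infinity>"
proof -
  interpret prob_space M by fact
  have "ennreal (f x powr t) \<le> 1 + ennreal (f x powr s)" for x
  proof -
    have "ennreal (f x powr t) \<le> ennreal (1 + f x powr s)"
      by (intro ennreal_leI powr_le_1_plus_powr) (use assms in auto)
    then show ?thesis
      by (simp add: ennreal_plus)
  qed
  then have "(\<integral>\<^sup>+ x. ennreal (f x powr t) \<partial>M) \<le> (\<integral>\<^sup>+ x. 1 + ennreal (f x powr s) \<partial>M)"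
    by (intro nn_integral_mono)
  also have "\<dots> = 1 + (\<integral>\<^sup>+ x. ennreal (f x powr s) \<partial>M)"
    by (simp add: nn_integral_add emeasure_space_1)
  finally show ?thesis
    using assms(6) by (simp add: order_le_less_trans)
qed

lemma finite_moment_mono:
  assumes "real_prob M" "0 \<le> t" "t \<le> s" "finite_moment s M"
  shows "finite_moment t M"
proof -
  have "prob_space M" "sets M = sets borel"
    using assms(1) by (simp_all add: real_prob_def)
  have "(\<lambda>x. \<bar>x\<bar>) \<in> borel_measurable M"
    by (subst measurable_cong_sets[OF \<open>sets M = sets borel\<close> refl]) simp
  from nn_integral_powr_finite_mono[OF \<open>prob_space M\<close> this _ assms(2,3)] assms(4)
  show ?thesis
    unfolding finite_moment_def by simp
qed

section \<open>Hoelder interpolation of the quadratic cost\<close>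

lemma conjugate_exponent_eq:
  fixes p q :: real
  assumes "q > 1" "1 / p + 1 / q = 1"
  shows "p = q / (q - 1)"
proof -
  have "1 / p = 1 - 1 / q"
    using assms(2) by simp
  also have "\<dots> = (q - 1) / q"
    using assms(1) by (simp add: diff_divide_distrib)
  finally have "inverse p = inverse (q / (q - 1))"
    by (simp add: inverse_eq_divide)
  then show ?thesis
    by (rule inverse_eq_imp_eq)
qed

lemma conjugate_exponent_gt_1:
  fixes p q :: real
  assumes "q > 1" "1 / p + 1 / q = 1"
  shows "p > 1"
  using assms(1) by (simp add: conjugate_exponent_eq[OF assms] field_simps)

lemma interpolation_exponent_gt_2:
  fixes p q r :: real
  assumes "q > 1" "1 / p + 1 / q = 1" "r = (2 - 1 / q) * p"
  shows "r > 2"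
proof -
  have "(2 - 1 / q) * (q / (q - 1)) = 2 + 1 / (q - 1)"
    using assms(1) by (simp add: field_simps)
  then show ?thesis
    using assms(1) unfolding assms(3) conjugate_exponent_eq[OF assms(1,2)] by simp
qed

lemma AE_zero_if_nn_integral_powr_zero:
  assumes "(\<integral>\<^sup>+ x. ennreal (f x powr p) \<partial>M) = 0" "f \<in> borel_measurable M" "\<And>x. f x \<ge> (0::real)"
  shows "AE x in M. f x = 0"
proof -
  have "AE x in M. ennreal (f x powr p) = 0"
    using assms(1,2) by (subst nn_integral_0_iff_AE[symmetric]) auto
  then show ?thesis
    by eventually_elim (use assms(3) in \<open>auto simp: ennreal_eq_0_iff\<close>)
qed

lemma nn_integral_Holder:
  fixes f g :: "'a \<Rightarrow> real"
  assumes pq: "p > 1" "q > 1" "1 / p + 1 / q = 1"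
    and [measurable]: "f \<in> borel_measurable M" "g \<in> borel_measurable M"
    and nonneg: "\<And>x. f x \<ge> 0" "\<And>x. g x \<ge> 0"
    and f: "(\<integral>\<^sup>+ x. ennreal (f x powr p) \<partial>M) = ennreal a" "a \<ge> 0"
    and g: "(\<integral>\<^sup>+ x. ennreal (g x powr q) \<partial>M) = ennreal b" "b \<ge> 0"
  shows "(\<integral>\<^sup>+ x. ennreal (f x * g x) \<partial>M) \<le> ennreal (a powr (1 / p) * b powr (1 / q))"
proof (cases "a = 0 \<or> b = 0")
  case True
  then have "AE x in M. f x = 0 \<or> g x = 0"
  proof
    assume "a = 0"
    then have "AE x in M. f x = 0"
      using f nonneg by (intro AE_zero_if_nn_integral_powr_zero[where p = p]) auto
    then show ?thesis
      by eventually_elim simp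
  next
    assume "b = 0"
    then have "AE x in M. g x = 0"
      using g nonneg by (intro AE_zero_if_nn_integral_powr_zero[where p = q]) auto
    then show ?thesis
      by eventually_elim simp
  qed
  then have "AE x in M. ennreal (f x * g x) = 0"
    by eventually_elim auto
  then have "(\<integral>\<^sup>+ x. ennreal (f x * g x) \<partial>M) = 0"
    by (subst nn_integral_0_iff_AE) auto
  then show ?thesis
    by simp
next
  case False
  then have "a > 0" "b > 0" using f g by auto
  define \<alpha> where "\<alpha> = a powr (1 / p)"
  define \<beta> where "\<beta> = b powr (1 / q)"
  have \<alpha>: "\<alpha> > 0" "\<alpha> powr p = a" and \<beta>: "\<beta> > 0" "\<beta> powr q = b"
    using \<open>a > 0\<close> \<open>b > 0\<close> pq by (auto simp: \<alpha>_def \<beta>_def powr_powr)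
  have Young: "f x * g x \<le> \<alpha> * \<beta> / (p * a) * f x powr p + \<alpha> * \<beta> / (q * b) * g x powr q" for x
  proof -
    have "(f x / \<alpha>) * (g x / \<beta>) \<le> (f x / \<alpha>) powr p / p + (g x / \<beta>) powr q / q"
      by (rule Youngs_inequality) (use pq nonneg \<alpha> \<beta> in auto)
    also have "\<dots> = f x powr p / (p * a) + g x powr q / (q * b)"
      using nonneg \<alpha> \<beta> by (simp add: powr_divide mult.commute)
    finally show ?thesis
      using \<alpha> \<beta> by (simp add: field_simps)
  qed
  have "(\<integral>\<^sup>+ x. ennreal (f x * g x) \<partial>M) \<le> (\<integral>\<^sup>+ x. ennreal (\<alpha> * \<beta> / (p * a)) * ennreal (f x powr p)
      + ennreal (\<alpha> * \<beta> / (q * b)) * ennreal (g x powr q) \<partial>M)"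
    using pq \<alpha> \<beta> \<open>a > 0\<close> \<open>b > 0\<close> Young
    by (intro nn_integral_mono) (simp add: ennreal_mult'[symmetric] ennreal_plus[symmetric] del: ennreal_plus)
  also have "\<dots> = ennreal (\<alpha> * \<beta> / (p * a)) * ennreal a + ennreal (\<alpha> * \<beta> / (q * b)) * ennreal b"
    by (simp add: nn_integral_add nn_integral_cmult f g)
  also have "\<dots> = ennreal (\<alpha> * \<beta> * (1 / p + 1 / q))"
    using pq \<alpha> \<beta> \<open>a > 0\<close> \<open>b > 0\<close>
    by (simp add: ennreal_mult'[symmetric] ennreal_plus[symmetric] field_simps del: ennreal_plus)
  finally show ?thesis
    using pq by (simp add: \<alpha>_def \<beta>_def)
qed

lemma transport_cost_2_interpolation:
  fixes d :: "'a \<Rightarrow> 'a \<Rightarrow> real"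
  assumes q: "q > 1" and pq: "1 / p + 1 / q = 1" and r: "r = (2 - 1 / q) * p"
    and [measurable]: "(\<lambda>z. d (fst z) (snd z)) \<in> borel_measurable \<pi>" and d: "\<And>x y. d x y \<ge> 0"
    and fin: "transport_cost d 1 \<pi> < \<infinity>" "transport_cost d r \<pi> < \<infinity>"
  shows "enn2real (transport_cost d 2 \<pi>)
    \<le> enn2real (transport_cost d 1 \<pi>) powr (1 / q) * enn2real (transport_cost d r \<pi>) powr (1 / p)"
proof -
  have p: "p > 1" using conjugate_exponent_gt_1[OF q pq] .
  have "transport_cost d 2 \<pi> = (\<integral>\<^sup>+ z. ennreal (d (fst z) (snd z) powr (1 / q) * d (fst z) (snd z) powr (2 - 1 / q)) \<partial>\<pi>)"
    by (simp add: powr_add[symmetric])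
  also have "\<dots> \<le> ennreal (enn2real (transport_cost d 1 \<pi>) powr (1 / q) * enn2real (transport_cost d r \<pi>) powr (1 / p))"
  proof (rule nn_integral_Holder[OF q p])
    show "(\<integral>\<^sup>+ z. ennreal ((d (fst z) (snd z) powr (1 / q)) powr q) \<partial>\<pi>) = ennreal (enn2real (transport_cost d 1 \<pi>))"
      using q fin d by (simp add: powr_powr less_top)
    show "(\<integral>\<^sup>+ z. ennreal ((d (fst z) (snd z) powr (2 - 1 / q)) powr p) \<partial>\<pi>) = ennreal (enn2real (transport_cost d r \<pi>))"
      using fin d by (simp add: powr_powr r less_top)
  qed (use pq d in auto)
  finally show ?thesis
    by (intro enn2real_leI) auto
qed

lemma sqrt_interpolation_bound:
  fixes W A B c q :: real
  assumes "0 \<le> W" "0 \<le> A" "0 \<le> B" "0 \<le> c" "q > 0"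
    and "W\<^sup>2 \<le> c * A powr (1 / q) * B powr (2 - 1 / q)"
  shows "W \<le> sqrt c * A powr (1 / (2 * q)) * B powr (1 - 1 / (2 * q))"
proof -
  have "W = sqrt (W\<^sup>2)"
    using assms(1) by simp
  also have "\<dots> \<le> sqrt (c * A powr (1 / q) * B powr (2 - 1 / q))"
    using assms(6) by (rule real_sqrt_le_mono)
  also have "\<dots> = sqrt c * (A powr (1 / q)) powr (1 / 2) * (B powr (2 - 1 / q)) powr (1 / 2)"
    by (simp add: real_sqrt_mult powr_half_sqrt)
  also have "\<dots> = sqrt c * A powr (1 / (2 * q)) * B powr (1 - 1 / (2 * q))"
    using assms(5) by (simp add: powr_powr field_simps)
  finally show ?thesis .
qed

section \<open>Costs on the line as integrals of crossing probabilities\<close>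

lemma nn_integral_Ico_FTC:
  fixes f F :: "real \<Rightarrow> real"
  assumes "a \<le> b" "continuous_on {a..b} F"
    "\<And>x. x \<in> {a<..<b} \<Longrightarrow> (F has_real_derivative f x) (at x)"
    "\<And>x. x \<in> {a..b} \<Longrightarrow> f x \<ge> 0"
  shows "(\<integral>\<^sup>+ x. ennreal (f x) * indicator {a..<b} x \<partial>lborel) = ennreal (F b - F a)"
proof -
  have "(f has_integral (F b - F a)) {a..b}"
    using assms by (intro fundamental_theorem_of_calculus_interior)
      (auto simp: has_real_derivative_iff_has_vector_derivative[symmetric])
  then have "(\<integral>\<^sup>+ x. ennreal (f x) * indicator {a..b} x \<partial>lborel) = ennreal (F b - F a)"
    using assms(4) by (intro nn_integral_has_integral_lebesgue') auto
  moreover have "(\<integral>\<^sup>+ x. ennreal (f x) * indicator {a..<b} x \<partial>lborel)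
      = (\<integral>\<^sup>+ x. ennreal (f x) * indicator {a..b} x \<partial>lborel)"
    by (intro nn_integral_cong_AE)
      (use AE_lborel_singleton[of b] in \<open>eventually_elim, auto split: split_indicator\<close>)
  ultimately show ?thesis
    by simp
qed

text \<open>The kernel is the mixed derivative \<open>-\<partial>\<^sub>a\<partial>\<^sub>b (b - a)\<^sup>s\<close>, so that its integral over
  \<open>x \<le> a \<le> b < y\<close> is \<open>(y - x)\<^sup>s\<close>.\<close>

definition powr_kernel :: "real \<Rightarrow> real \<Rightarrow> real \<Rightarrow> real" where
  "powr_kernel s a b = (if a \<le> b then s * (s - 1) * (b - a) powr (s - 2) else 0)"

lemma powr_kernel_measurable [measurable]:
  "(\<lambda>(a, b). powr_kernel s a b) \<in> borel_measurable (borel \<Otimes>\<^sub>M borel)"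
  unfolding powr_kernel_def by measurable

lemma nn_integral_powr_kernel:
  assumes "s > 1"
  shows "(\<integral>\<^sup>+ b. ennreal (powr_kernel s a b) * indicator {..<y} b \<partial>lborel)
    = ennreal (if a < y then s * (y - a) powr (s - 1) else 0)"
proof (cases "a < y")
  case True
  have "(\<integral>\<^sup>+ b. ennreal (powr_kernel s a b) * indicator {..<y} b \<partial>lborel)
      = (\<integral>\<^sup>+ b. ennreal (s * (s - 1) * (b - a) powr (s - 2)) * indicator {a..<y} b \<partial>lborel)"
    by (intro nn_integral_cong) (auto simp: powr_kernel_def split: split_indicator)
  also have "\<dots> = ennreal (s * (y - a) powr (s - 1) - s * (a - a) powr (s - 1))"
  proof (rule nn_integral_Ico_FTC)
    show "continuous_on {a..y} (\<lambda>b. s * (b - a) powr (s - 1))"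
      using assms by (intro continuous_intros continuous_on_powr') auto
    show "((\<lambda>b. s * (b - a) powr (s - 1)) has_real_derivative s * (s - 1) * (b - a) powr (s - 2)) (at b)"
      if "b \<in> {a<..<y}" for b
      using that by (auto intro!: derivative_eq_intros simp: field_simps)
  qed (use True assms in auto)
  finally show ?thesis
    using True by simp
next
  case False
  then show ?thesis
    by (subst nn_integral_0_iff_AE[THEN iffD2]) (auto simp: powr_kernel_def split: split_indicator)
qed

lemma nn_integral_nn_integral_powr_kernel:
  assumes "s > 1"
  shows "(\<integral>\<^sup>+ a. \<integral>\<^sup>+ b. ennreal (powr_kernel s a b) * indicator {x..} a * indicator {..<y} b \<partial>lborel \<partial>lborel)
    = ennreal (if x < y then (y - x) powr s else 0)"
proof (cases "x < y")
  case True
  have "(\<integral>\<^sup>+ a. \<integral>\<^sup>+ b. ennreal (powr_kernel s a b) * indicator {x..} a * indicator {..<y} b \<partial>lborel \<partial>lborel)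
      = (\<integral>\<^sup>+ a. ennreal (s * (y - a) powr (s - 1)) * indicator {x..<y} a \<partial>lborel)"
    by (intro nn_integral_cong)
      (auto simp: nn_integral_cmult nn_integral_powr_kernel[OF assms] mult.assoc mult.left_commute[of "indicator _ _"] split: split_indicator)
  also have "\<dots> = ennreal (- ((y - y) powr s) - - ((y - x) powr s))"
  proof (rule nn_integral_Ico_FTC)
    show "continuous_on {x..y} (\<lambda>a. - ((y - a) powr s))"
      using assms by (intro continuous_intros continuous_on_powr') auto
    show "((\<lambda>a. - ((y - a) powr s)) has_real_derivative s * (y - a) powr (s - 1)) (at a)"
      if "a \<in> {x<..<y}" for a
      using that by (auto intro!: derivative_eq_intros simp: field_simps)
  qed (use True assms in auto)
  finally show ?thesis
    using True by simp
next
  case False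
  then show ?thesis
    by (subst nn_integral_0_iff_AE[THEN iffD2])
      (auto simp: nn_integral_cmult nn_integral_powr_kernel[OF assms] split: split_indicator)
qed

lemma abs_diff_powr_eq_double_integral:
  assumes "s > 1"
  shows "ennreal (\<bar>x - y\<bar> powr s) = (\<integral>\<^sup>+ a. \<integral>\<^sup>+ b. ennreal (powr_kernel s a b) *
    ((if x \<le> a \<and> b < y then 1 else 0) + (if y \<le> a \<and> b < x then 1 else 0)) \<partial>lborel \<partial>lborel)"
proof -
  have "(\<integral>\<^sup>+ a. \<integral>\<^sup>+ b. ennreal (powr_kernel s a b) *
      ((if x \<le> a \<and> b < y then 1 else 0) + (if y \<le> a \<and> b < x then 1 else 0)) \<partial>lborel \<partial>lborel)
    = (\<integral>\<^sup>+ a. \<integral>\<^sup>+ b. ennreal (powr_kernel s a b) * indicator {x..} a * indicator {..<y} b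
        + ennreal (powr_kernel s a b) * indicator {y..} a * indicator {..<x} b \<partial>lborel \<partial>lborel)"
    by (intro nn_integral_cong) (auto simp: distrib_left split: split_indicator)
  also have "\<dots> = (\<integral>\<^sup>+ a. \<integral>\<^sup>+ b. ennreal (powr_kernel s a b) * indicator {x..} a * indicator {..<y} b \<partial>lborel \<partial>lborel)
      + (\<integral>\<^sup>+ a. \<integral>\<^sup>+ b. ennreal (powr_kernel s a b) * indicator {y..} a * indicator {..<x} b \<partial>lborel \<partial>lborel)"
    by (simp add: nn_integral_add)
  finally show ?thesis
    using assms by (simp add: nn_integral_nn_integral_powr_kernel abs_real_def)
qed

lemma abs_diff_eq_integral:
  "ennreal \<bar>x - y\<bar> = (\<integral>\<^sup>+ a. (if x \<le> a \<and> a < y then 1 else 0) + (if y \<le> a \<and> a < x then 1 else 0) \<partial>lborel)"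
proof -
  have "(\<integral>\<^sup>+ a. (if x \<le> a \<and> a < y then 1 else 0) + (if y \<le> a \<and> a < x then 1 else 0) \<partial>lborel)
      = (\<integral>\<^sup>+ a. indicator {x..<y} a \<partial>lborel) + (\<integral>\<^sup>+ a. indicator {y..<x} a \<partial>lborel)"
    by (subst nn_integral_add[symmetric]) (auto intro!: nn_integral_cong split: split_indicator)
  then show ?thesis
    by (cases x y rule: linorder_cases) auto
qed

definition crossing :: "'a measure \<Rightarrow> ('a \<Rightarrow> real) \<Rightarrow> ('a \<Rightarrow> real) \<Rightarrow> real \<Rightarrow> real \<Rightarrow> ennreal" where
  "crossing \<pi> X Y a b = emeasure \<pi> {z \<in> space \<pi>. X z \<le> a \<and> b < Y z}"

lemma nn_integral_crossing_indicators:
  assumes [measurable_cong]: "sets \<pi> = sets (borel \<Otimes>\<^sub>M borel)"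
  shows "(\<integral>\<^sup>+ z. (if fst z \<le> a \<and> b < snd z then 1 else 0) + (if snd z \<le> a \<and> b < fst z then 1 else 0) \<partial>\<pi>)
    = crossing \<pi> fst snd a b + crossing \<pi> snd fst a b"
proof -
  have "(\<integral>\<^sup>+ z. (if fst z \<le> a \<and> b < snd z then 1 else 0) + (if snd z \<le> a \<and> b < fst z then 1 else 0) \<partial>\<pi>)
      = (\<integral>\<^sup>+ z. indicator {z \<in> space \<pi>. fst z \<le> a \<and> b < snd z} z + indicator {z \<in> space \<pi>. snd z \<le> a \<and> b < fst z} z \<partial>\<pi>)"
    by (intro nn_integral_cong) (auto split: split_indicator)
  also have "\<dots> = crossing \<pi> fst snd a b + crossing \<pi> snd fst a b"
    unfolding crossing_def by (subst nn_integral_add) auto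
  finally show ?thesis .
qed

lemma transport_cost_abs_powr_eq_crossing:
  assumes "s > 1" "sigma_finite_measure \<pi>" and [measurable_cong]: "sets \<pi> = sets (borel \<Otimes>\<^sub>M borel)"
  shows "transport_cost (\<lambda>x y. \<bar>x - y\<bar>) s \<pi>
    = (\<integral>\<^sup>+ a. \<integral>\<^sup>+ b. ennreal (powr_kernel s a b) * (crossing \<pi> fst snd a b + crossing \<pi> snd fst a b) \<partial>lborel \<partial>lborel)"
proof -
  interpret pair_sigma_finite \<pi> lborel
    using assms(2) by (simp add: pair_sigma_finite_def lborel.sigma_finite_measure_axioms)
  define G where "G z a b = ennreal (powr_kernel s a b) *
    ((if fst z \<le> a \<and> b < snd z then 1 else 0) + (if snd z \<le> a \<and> b < fst z then 1 else 0))"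
    for z :: "real \<times> real" and a b
  have [measurable]: "(\<lambda>x. G (fst (fst x)) (snd (fst x)) (snd x)) \<in> borel_measurable ((\<pi> \<Otimes>\<^sub>M lborel) \<Otimes>\<^sub>M lborel)"
    unfolding G_def by measurable
  then have [measurable]: "(\<lambda>((z, a), b). G z a b) \<in> borel_measurable ((\<pi> \<Otimes>\<^sub>M lborel) \<Otimes>\<^sub>M lborel)"
    by (simp add: split_beta')
  have [measurable]: "(\<lambda>(z, b). G z a b) \<in> borel_measurable (\<pi> \<Otimes>\<^sub>M lborel)" for a
    unfolding G_def by measurable
  have "transport_cost (\<lambda>x y. \<bar>x - y\<bar>) s \<pi> = (\<integral>\<^sup>+ z. \<integral>\<^sup>+ a. \<integral>\<^sup>+ b. G z a b \<partial>lborel \<partial>lborel \<partial>\<pi>)"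
    unfolding G_def by (intro nn_integral_cong) (simp add: abs_diff_powr_eq_double_integral[OF assms(1)])
  also have "\<dots> = (\<integral>\<^sup>+ a. \<integral>\<^sup>+ z. \<integral>\<^sup>+ b. G z a b \<partial>lborel \<partial>\<pi> \<partial>lborel)"
    by (rule Fubini'[symmetric]) measurable
  also have "\<dots> = (\<integral>\<^sup>+ a. \<integral>\<^sup>+ b. \<integral>\<^sup>+ z. G z a b \<partial>\<pi> \<partial>lborel \<partial>lborel)"
    by (intro nn_integral_cong Fubini'[symmetric]) measurable
  also have "\<dots> = (\<integral>\<^sup>+ a. \<integral>\<^sup>+ b. ennreal (powr_kernel s a b) * (crossing \<pi> fst snd a b + crossing \<pi> snd fst a b) \<partial>lborel \<partial>lborel)"
    unfolding G_def by (simp add: nn_integral_cmult nn_integral_crossing_indicators[OF assms(3)])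
  finally show ?thesis .
qed

lemma transport_cost_abs_eq_crossing:
  assumes "sigma_finite_measure \<pi>" and [measurable_cong]: "sets \<pi> = sets (borel \<Otimes>\<^sub>M borel)"
  shows "transport_cost (\<lambda>x y. \<bar>x - y\<bar>) 1 \<pi> = (\<integral>\<^sup>+ a. crossing \<pi> fst snd a a + crossing \<pi> snd fst a a \<partial>lborel)"
proof -
  interpret pair_sigma_finite \<pi> lborel
    using assms(1) by (simp add: pair_sigma_finite_def lborel.sigma_finite_measure_axioms)
  define G where "G z a = ((if fst z \<le> a \<and> a < snd z then 1 else 0)
    + (if snd z \<le> a \<and> a < fst z then 1 else 0) :: ennreal)" for z :: "real \<times> real" and a
  have [measurable]: "(\<lambda>(z, a). G z a) \<in> borel_measurable (\<pi> \<Otimes>\<^sub>M lborel)"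
    unfolding G_def by measurable
  have "transport_cost (\<lambda>x y. \<bar>x - y\<bar>) 1 \<pi> = (\<integral>\<^sup>+ z. \<integral>\<^sup>+ a. G z a \<partial>lborel \<partial>\<pi>)"
    unfolding G_def by (intro nn_integral_cong) (simp add: abs_diff_eq_integral)
  also have "\<dots> = (\<integral>\<^sup>+ a. \<integral>\<^sup>+ z. G z a \<partial>\<pi> \<partial>lborel)"
    by (rule Fubini'[symmetric]) measurable
  also have "\<dots> = (\<integral>\<^sup>+ a. crossing \<pi> fst snd a a + crossing \<pi> snd fst a a \<partial>lborel)"
    unfolding G_def by (intro nn_integral_cong nn_integral_crossing_indicators assms(2))
  finally show ?thesis .
qed

section \<open>Optimality of the quantile coupling\<close>

lemma coupling_real_prob:
  assumes "\<pi> \<in> couplings \<nu> \<mu>" "real_prob \<nu>" "real_prob \<mu>"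
  shows "prob_space \<pi>" "sets \<pi> = sets (borel \<Otimes>\<^sub>M borel)" "distr \<pi> \<nu> fst = \<nu>" "distr \<pi> \<mu> snd = \<mu>"
  using assms unfolding couplings_def real_prob_def by (auto intro!: sets_pair_measure_cong)

lemma coupling_cdf:
  assumes "\<pi> \<in> couplings \<nu> \<mu>" "real_prob \<nu>" "real_prob \<mu>"
  shows "measure \<pi> {z \<in> space \<pi>. fst z \<le> a} = cdf \<nu> a" "measure \<pi> {z \<in> space \<pi>. snd z \<le> a} = cdf \<mu> a"
proof -
  note \<pi> = coupling_real_prob[OF assms]
  have [measurable_cong]: "sets \<pi> = sets (borel \<Otimes>\<^sub>M borel)" "sets \<nu> = sets borel" "sets \<mu> = sets borel"
    using \<pi>(2) assms(2,3) by (auto simp: real_prob_def)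
  have "cdf \<nu> a = measure (distr \<pi> \<nu> fst) {..a}" "cdf \<mu> a = measure (distr \<pi> \<mu> snd) {..a}"
    by (simp_all add: \<pi>(3,4) cdf_def)
  then show "measure \<pi> {z \<in> space \<pi>. fst z \<le> a} = cdf \<nu> a" "measure \<pi> {z \<in> space \<pi>. snd z \<le> a} = cdf \<mu> a"
    by (simp_all add: measure_distr vimage_def Int_def conj_commute)
qed

lemma measure_diff_le_crossing:
  assumes "prob_space \<pi>" and [measurable]: "X \<in> borel_measurable \<pi>" "Y \<in> borel_measurable \<pi>"
  shows "ennreal (measure \<pi> {z \<in> space \<pi>. X z \<le> a} - measure \<pi> {z \<in> space \<pi>. Y z \<le> b}) \<le> crossing \<pi> X Y a b"
proof -
  interpret prob_space \<pi> by fact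
  have "measure \<pi> {z \<in> space \<pi>. X z \<le> a}
      \<le> measure \<pi> ({z \<in> space \<pi>. X z \<le> a \<and> b < Y z} \<union> {z \<in> space \<pi>. Y z \<le> b})"
    by (intro finite_measure_mono) auto
  also have "\<dots> \<le> measure \<pi> {z \<in> space \<pi>. X z \<le> a \<and> b < Y z} + measure \<pi> {z \<in> space \<pi>. Y z \<le> b}"
    by (intro measure_Un_le) auto
  finally show ?thesis
    unfolding crossing_def emeasure_eq_measure by (intro ennreal_leI) simp
qed

definition uniform_01 :: "real measure" where
  "uniform_01 = restrict_space lborel {0<..<1}"

definition quantile :: "real measure \<Rightarrow> real \<Rightarrow> real" where
  "quantile M \<omega> = Inf {x. \<omega> \<le> cdf M x}"

definition quantile_coupling :: "real measure \<Rightarrow> real measure \<Rightarrow> (real \<times> real) measure" where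
  "quantile_coupling \<nu> \<mu> = distr uniform_01 (borel \<Otimes>\<^sub>M borel) (\<lambda>\<omega>. (quantile \<nu> \<omega>, quantile \<mu> \<omega>))"

lemma real_prob_cdf_distribution: "real_prob M \<Longrightarrow> cdf_distribution M"
  unfolding real_prob_def cdf_distribution_def real_distribution_def real_distribution_axioms_def by auto

lemma prob_space_uniform_01: "prob_space uniform_01"
  unfolding uniform_01_def by (auto simp: emeasure_restrict_space space_restrict_space intro!: prob_spaceI)

lemma space_uniform_01: "space uniform_01 = {0<..<1}"
  unfolding uniform_01_def by (simp add: space_restrict_space)

lemma quantile_measurable [measurable]:
  assumes "real_prob M"
  shows "quantile M \<in> borel_measurable uniform_01"
proof -
  interpret cdf_distribution M using real_prob_cdf_distribution[OF assms] .
  have "I \<in> borel_measurable (restrict_space borel {0<..<1})" by (rule measurable_CI)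
  then show ?thesis unfolding uniform_01_def quantile_def
    by (subst measurable_cong_sets[OF sets_restrict_space_cong[OF sets_lborel] refl])
qed

lemma distr_quantile:
  assumes "real_prob M"
  shows "distr uniform_01 M (quantile M) = M"
proof -
  interpret cdf_distribution M using real_prob_cdf_distribution[OF assms] .
  have "distr uniform_01 M (quantile M) = distr uniform_01 borel (quantile M)"
    by (intro distr_cong) auto
  also have "\<dots> = M"
    unfolding uniform_01_def quantile_def by (rule distr_I_eq_M)
  finally show ?thesis .
qed

lemma quantile_le_iff:
  assumes "real_prob M" "0 < \<omega>" "\<omega> < 1"
  shows "quantile M \<omega> \<le> x \<longleftrightarrow> \<omega> \<le> cdf M x"
proof -
  interpret cdf_distribution M using real_prob_cdf_distribution[OF assms(1)] .
  show ?thesis unfolding quantile_def using pseudoinverse assms(2,3) by blast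
qed

lemma quantile_coupling_in_couplings:
  assumes "real_prob \<nu>" "real_prob \<mu>"
  shows "quantile_coupling \<nu> \<mu> \<in> couplings \<nu> \<mu>"
proof -
  interpret prob_space uniform_01 by (rule prob_space_uniform_01)
  have [measurable]: "(\<lambda>\<omega>. (quantile \<nu> \<omega>, quantile \<mu> \<omega>)) \<in> uniform_01 \<rightarrow>\<^sub>M borel \<Otimes>\<^sub>M borel"
    using assms by measurable
  show ?thesis
    unfolding couplings_def quantile_coupling_def using assms
    by (auto simp: prob_space_distr distr_distr comp_def distr_quantile real_prob_def intro!: sets_pair_measure_cong)
qed

lemma quantile_crossing_le:
  assumes "real_prob M" "real_prob N"
  shows "emeasure lborel {\<omega> \<in> {0<..<1}. quantile M \<omega> \<le> a \<and> b < quantile N \<omega>} \<le> ennreal (cdf M a - cdf N b)"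
proof -
  have "emeasure lborel {\<omega> \<in> {0<..<1}. quantile M \<omega> \<le> a \<and> b < quantile N \<omega>} \<le> emeasure lborel {cdf N b <.. cdf M a}"
    using quantile_le_iff[OF assms(1)] quantile_le_iff[OF assms(2)] by (intro emeasure_mono) (force simp: not_le)+
  also have "\<dots> = ennreal (cdf M a - cdf N b)"
    by (cases "cdf N b \<le> cdf M a") (auto simp: ennreal_eq_0_iff)
  finally show ?thesis .
qed

lemma crossing_quantile_coupling:
  assumes "real_prob \<nu>" "real_prob \<mu>" and [measurable]: "X \<in> borel_measurable (borel \<Otimes>\<^sub>M borel)" "Y \<in> borel_measurable (borel \<Otimes>\<^sub>M borel)"
  shows "crossing (quantile_coupling \<nu> \<mu>) X Y a b
    = emeasure lborel {\<omega> \<in> {0<..<1}. X (quantile \<nu> \<omega>, quantile \<mu> \<omega>) \<le> a \<and> b < Y (quantile \<nu> \<omega>, quantile \<mu> \<omega>)}"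
proof -
  have [measurable]: "(\<lambda>\<omega>. (quantile \<nu> \<omega>, quantile \<mu> \<omega>)) \<in> uniform_01 \<rightarrow>\<^sub>M borel \<Otimes>\<^sub>M borel"
    using assms by measurable
  have "{z \<in> space (borel \<Otimes>\<^sub>M borel). X z \<le> a \<and> b < Y z} \<in> sets (borel \<Otimes>\<^sub>M borel)"
    by measurable
  then have "crossing (quantile_coupling \<nu> \<mu>) X Y a b
      = emeasure uniform_01 {\<omega> \<in> space uniform_01. X (quantile \<nu> \<omega>, quantile \<mu> \<omega>) \<le> a \<and> b < Y (quantile \<nu> \<omega>, quantile \<mu> \<omega>)}"
    unfolding crossing_def quantile_coupling_def
    by (subst emeasure_distr) (auto simp: space_pair_measure intro!: arg_cong2[where f=emeasure])
  also have "\<dots> = emeasure lborel {\<omega> \<in> {0<..<1}. X (quantile \<nu> \<omega>, quantile \<mu> \<omega>) \<le> a \<and> b < Y (quantile \<nu> \<omega>, quantile \<mu> \<omega>)}"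
    unfolding space_uniform_01 unfolding uniform_01_def
    by (rule emeasure_restrict_space) auto
  finally show ?thesis .
qed

lemma quantile_coupling_crossing_le:
  assumes "\<pi> \<in> couplings \<nu> \<mu>" "real_prob \<nu>" "real_prob \<mu>"
  shows "crossing (quantile_coupling \<nu> \<mu>) fst snd a b \<le> crossing \<pi> fst snd a b"
    and "crossing (quantile_coupling \<nu> \<mu>) snd fst a b \<le> crossing \<pi> snd fst a b"
proof -
  note \<pi> = coupling_real_prob[OF assms]
  have [measurable_cong]: "sets \<pi> = sets (borel \<Otimes>\<^sub>M borel)"
    by (fact \<pi>(2))
  have "crossing (quantile_coupling \<nu> \<mu>) fst snd a b \<le> ennreal (cdf \<nu> a - cdf \<mu> b)"
    using quantile_crossing_le[OF assms(2,3)] by (simp add: crossing_quantile_coupling assms)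
  also have "\<dots> \<le> crossing \<pi> fst snd a b"
    using measure_diff_le_crossing[OF \<pi>(1), of fst snd a b] by (simp add: coupling_cdf[OF assms])
  finally show "crossing (quantile_coupling \<nu> \<mu>) fst snd a b \<le> crossing \<pi> fst snd a b" .
  have "crossing (quantile_coupling \<nu> \<mu>) snd fst a b \<le> ennreal (cdf \<mu> a - cdf \<nu> b)"
    using quantile_crossing_le[OF assms(3,2)] by (simp add: crossing_quantile_coupling assms)
  also have "\<dots> \<le> crossing \<pi> snd fst a b"
    using measure_diff_le_crossing[OF \<pi>(1), of snd fst a b] by (simp add: coupling_cdf[OF assms])
  finally show "crossing (quantile_coupling \<nu> \<mu>) snd fst a b \<le> crossing \<pi> snd fst a b" .
qed

lemma quantile_coupling_optimal:
  assumes "\<pi> \<in> couplings \<nu> \<mu>" "real_prob \<nu>" "real_prob \<mu>" "s \<ge> 1"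
  shows "transport_cost (\<lambda>x y. \<bar>x - y\<bar>) s (quantile_coupling \<nu> \<mu>) \<le> transport_cost (\<lambda>x y. \<bar>x - y\<bar>) s \<pi>"
proof -
  note quantile = coupling_real_prob[OF quantile_coupling_in_couplings[OF assms(2,3)] assms(2,3)]
  note \<pi> = coupling_real_prob[OF assms(1-3)]
  note crossing_le = quantile_coupling_crossing_le[OF assms(1-3)]
  consider "s = 1" | "s > 1"
    using assms(4) by linarith
  then show ?thesis
  proof cases
    case 1
    show ?thesis
      unfolding 1 transport_cost_abs_eq_crossing[OF prob_space_imp_sigma_finite[OF quantile(1)] quantile(2)]
        transport_cost_abs_eq_crossing[OF prob_space_imp_sigma_finite[OF \<pi>(1)] \<pi>(2)]
      by (intro nn_integral_mono add_mono crossing_le)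
  next
    case 2
    then show ?thesis
      using quantile \<pi> crossing_le
      by (simp add: transport_cost_abs_powr_eq_crossing prob_space_imp_sigma_finite add_mono nn_integral_mono mult_left_mono)
  qed
qed

lemma W_real_eq_quantile_coupling:
  assumes "real_prob \<nu>" "real_prob \<mu>" "s \<ge> 1"
  shows "W_real s \<nu> \<mu> = enn2real (transport_cost (\<lambda>x y. \<bar>x - y\<bar>) s (quantile_coupling \<nu> \<mu>)) powr (1 / s)"
proof -
  have "(INF \<pi> \<in> couplings \<nu> \<mu>. transport_cost (\<lambda>x y. \<bar>x - y\<bar>) s \<pi>)
      = transport_cost (\<lambda>x y. \<bar>x - y\<bar>) s (quantile_coupling \<nu> \<mu>)"
    using quantile_coupling_in_couplings quantile_coupling_optimal assms
    by (intro antisym INF_lower INF_greatest) auto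
  then show ?thesis
    by (simp add: W_real_def wasserstein_def)
qed

section \<open>The inequality on the line\<close>

lemma abs_diff_powr_le:
  fixes x y s :: real
  assumes "s \<ge> 0"
  shows "\<bar>x - y\<bar> powr s \<le> 2 powr s * (\<bar>x\<bar> powr s + \<bar>y\<bar> powr s)"
proof -
  have "\<bar>x - y\<bar> powr s \<le> (2 * max \<bar>x\<bar> \<bar>y\<bar>) powr s"
    using assms by (intro powr_mono2) auto
  also have "\<dots> = 2 powr s * max \<bar>x\<bar> \<bar>y\<bar> powr s"
    by (simp add: powr_mult)
  also have "max \<bar>x\<bar> \<bar>y\<bar> powr s \<le> \<bar>x\<bar> powr s + \<bar>y\<bar> powr s"
    by (auto simp: max_def)
  finally show ?thesis
    by simp
qed

lemma transport_cost_finite_if_finite_moments: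
  assumes "\<pi> \<in> couplings \<nu> \<mu>" "real_prob \<nu>" "real_prob \<mu>"
    and "s \<ge> 0" "finite_moment s \<nu>" "finite_moment s \<mu>"
  shows "transport_cost (\<lambda>x y. \<bar>x - y\<bar>) s \<pi> < \<infinity>"
proof -
  note \<pi> = coupling_real_prob[OF assms(1-3)]
  have [measurable_cong]: "sets \<pi> = sets (borel \<Otimes>\<^sub>M borel)" "sets \<nu> = sets borel" "sets \<mu> = sets borel"
    using \<pi>(2) assms(2,3) by (auto simp: real_prob_def)
  have moment: "(\<integral>\<^sup>+ z. ennreal (\<bar>fst z\<bar> powr s) \<partial>\<pi>) = (\<integral>\<^sup>+ x. ennreal (\<bar>x\<bar> powr s) \<partial>\<nu>)"
    "(\<integral>\<^sup>+ z. ennreal (\<bar>snd z\<bar> powr s) \<partial>\<pi>) = (\<integral>\<^sup>+ x. ennreal (\<bar>x\<bar> powr s) \<partial>\<mu>)"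
    using nn_integral_distr[of fst \<pi> \<nu> "\<lambda>x. ennreal (\<bar>x\<bar> powr s)"]
      nn_integral_distr[of snd \<pi> \<mu> "\<lambda>x. ennreal (\<bar>x\<bar> powr s)"] by (simp_all add: \<pi>(3,4))
  have "transport_cost (\<lambda>x y. \<bar>x - y\<bar>) s \<pi>
      \<le> (\<integral>\<^sup>+ z. ennreal (2 powr s) * (ennreal (\<bar>fst z\<bar> powr s) + ennreal (\<bar>snd z\<bar> powr s)) \<partial>\<pi>)"
    using abs_diff_powr_le[OF assms(4)]
    by (intro nn_integral_mono) (simp add: ennreal_mult'[symmetric] ennreal_plus[symmetric] del: ennreal_plus)
  also have "\<dots> = ennreal (2 powr s) * ((\<integral>\<^sup>+ x. ennreal (\<bar>x\<bar> powr s) \<partial>\<nu>) + (\<integral>\<^sup>+ x. ennreal (\<bar>x\<bar> powr s) \<partial>\<mu>))"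
    by (simp add: nn_integral_cmult nn_integral_add moment)
  also have "\<dots> < \<infinity>"
    using assms(5,6) unfolding finite_moment_def by (simp add: ennreal_mult_less_top)
  finally show ?thesis .
qed

lemma W_real_2_squared_le:
  assumes q: "q > 1" and pq: "1 / p + 1 / q = 1" and r: "r = (2 - 1 / q) * p"
    and \<nu>: "real_prob \<nu>" "finite_moment r \<nu>" and \<mu>: "real_prob \<mu>" "finite_moment r \<mu>"
  shows "(W_real 2 \<nu> \<mu>)\<^sup>2 \<le> W_real 1 \<nu> \<mu> powr (1 / q) * W_real r \<nu> \<mu> powr (2 - 1 / q)"
proof -
  define \<pi> where "\<pi> = quantile_coupling \<nu> \<mu>"
  let ?cost = "\<lambda>s. enn2real (transport_cost (\<lambda>x y. \<bar>x - y\<bar>) s \<pi>)"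
  have "r > 2" "p > 1"
    using interpolation_exponent_gt_2[OF assms(1-3)] conjugate_exponent_gt_1[OF q pq] by auto
  have \<pi>_coupling: "\<pi> \<in> couplings \<nu> \<mu>"
    unfolding \<pi>_def by (rule quantile_coupling_in_couplings[OF \<nu>(1) \<mu>(1)])
  note \<pi> = coupling_real_prob[OF \<pi>_coupling \<nu>(1) \<mu>(1)]
  have [measurable_cong]: "sets \<pi> = sets (borel \<Otimes>\<^sub>M borel)"
    by (fact \<pi>(2))
  have fin_r: "transport_cost (\<lambda>x y. \<bar>x - y\<bar>) r \<pi> < \<infinity>"
    using transport_cost_finite_if_finite_moments[OF \<pi>_coupling \<nu>(1) \<mu>(1) _ \<nu>(2) \<mu>(2)] \<open>r > 2\<close> by simp
  have fin_1: "transport_cost (\<lambda>x y. \<bar>x - y\<bar>) 1 \<pi> < \<infinity>"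
    using nn_integral_powr_finite_mono[OF \<pi>(1) _ _ _ _ fin_r, of 1] \<open>r > 2\<close> by simp
  have W: "W_real s \<nu> \<mu> = ?cost s powr (1 / s)" if "s \<ge> 1" for s
    unfolding \<pi>_def using W_real_eq_quantile_coupling[OF \<nu>(1) \<mu>(1) that] .
  have "(W_real 2 \<nu> \<mu>)\<^sup>2 = ?cost 2"
    by (simp add: W powr_half_sqrt)
  also have "\<dots> \<le> ?cost 1 powr (1 / q) * ?cost r powr (1 / p)"
    by (rule transport_cost_2_interpolation[OF q pq r _ _ fin_1 fin_r]) auto
  also have "1 / p = 1 / r * (2 - 1 / q)"
    using q \<open>p > 1\<close> unfolding r by (simp add: field_simps)
  also have "?cost r powr (1 / r * (2 - 1 / q)) = (?cost r powr (1 / r)) powr (2 - 1 / q)"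
    by (simp add: powr_powr)
  finally show ?thesis
    using \<open>r > 2\<close> by (simp add: W)
qed

section \<open>Product measures\<close>

definition prod_coupling :: "'i set \<Rightarrow> ('i \<Rightarrow> 'a measure) \<Rightarrow> ('i \<Rightarrow> 'b measure) \<Rightarrow> ('i \<Rightarrow> ('a \<times> 'b) measure)
    \<Rightarrow> (('i \<Rightarrow> 'a) \<times> ('i \<Rightarrow> 'b)) measure" where
  "prod_coupling I M N \<pi> = distr (PiM I \<pi>) (PiM I M \<Otimes>\<^sub>M PiM I N) (\<lambda>z. (\<lambda>i\<in>I. fst (z i), \<lambda>i\<in>I. snd (z i)))"

lemma measurable_unzip_PiM:
  assumes "\<And>i. i \<in> I \<Longrightarrow> sets (\<pi> i) = sets (M i \<Otimes>\<^sub>M N i)"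
  shows "(\<lambda>z. (\<lambda>i\<in>I. fst (z i), \<lambda>i\<in>I. snd (z i))) \<in> PiM I \<pi> \<rightarrow>\<^sub>M PiM I M \<Otimes>\<^sub>M PiM I N"
proof (intro measurable_Pair measurable_restrict)
  fix i assume "i \<in> I"
  then have "fst \<in> \<pi> i \<rightarrow>\<^sub>M M i" "snd \<in> \<pi> i \<rightarrow>\<^sub>M N i"
    using assms by (simp_all add: measurable_cong_sets[OF assms refl])
  then show "(\<lambda>z. fst (z i)) \<in> PiM I \<pi> \<rightarrow>\<^sub>M M i" "(\<lambda>z. snd (z i)) \<in> PiM I \<pi> \<rightarrow>\<^sub>M N i"
    using \<open>i \<in> I\<close> by measurable
qed

lemma prod_coupling_in_couplings:
  assumes "finite I" "\<And>i. i \<in> I \<Longrightarrow> \<pi> i \<in> couplings (M i) (N i)"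
  shows "prod_coupling I M N \<pi> \<in> couplings (PiM I M) (PiM I N)"
proof -
  have \<pi>: "prob_space (\<pi> i)" "sets (\<pi> i) = sets (M i \<Otimes>\<^sub>M N i)"
    "distr (\<pi> i) (M i) fst = M i" "distr (\<pi> i) (N i) snd = N i" if "i \<in> I" for i
    using assms(2)[OF that] unfolding couplings_def by auto
  have fst_snd: "fst \<in> \<pi> i \<rightarrow>\<^sub>M M i" "snd \<in> \<pi> i \<rightarrow>\<^sub>M N i" if "i \<in> I" for i
    by (simp_all add: measurable_cong_sets[OF \<pi>(2)[OF that] refl])
  have prob: "prob_space (M i)" "prob_space (N i)" if "i \<in> I" for i
    using prob_space.prob_space_distr[OF \<pi>(1) fst_snd(1)] prob_space.prob_space_distr[OF \<pi>(1) fst_snd(2)] \<pi>(3,4) that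
    by metis+
  note unzip [measurable] = measurable_unzip_PiM[OF \<pi>(2)]
  interpret prob_space "PiM I \<pi>"
    using \<pi>(1) by (rule prob_space_PiM)
  have "distr (prod_coupling I M N \<pi>) (PiM I M) fst = PiM I (\<lambda>i. distr (\<pi> i) (M i) fst)"
    unfolding prod_coupling_def
    by (subst distr_distr, measurable, subst distr_PiM_finite_prob_space'[symmetric])
      (auto simp: assms(1) \<pi>(1) prob fst_snd comp_def compose_def intro!: distr_cong)
  also have "\<dots> = PiM I M"
    by (intro PiM_cong) (simp_all add: \<pi>(3))
  finally have "distr (prod_coupling I M N \<pi>) (PiM I M) fst = PiM I M" .
  moreover have "distr (prod_coupling I M N \<pi>) (PiM I N) snd = PiM I (\<lambda>i. distr (\<pi> i) (N i) snd)"
    unfolding prod_coupling_def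
    by (subst distr_distr, measurable, subst distr_PiM_finite_prob_space'[symmetric])
      (auto simp: assms(1) \<pi>(1) prob fst_snd comp_def compose_def intro!: distr_cong)
  moreover have "\<dots> = PiM I N"
    by (intro PiM_cong) (simp_all add: \<pi>(4))
  ultimately show ?thesis
    unfolding couplings_def prod_coupling_def by (auto intro: prob_space_distr)
qed

lemma coupling_component:
  assumes "\<pi> \<in> couplings (PiM I M) (PiM I N)" "i \<in> I"
    and "\<And>i. i \<in> I \<Longrightarrow> prob_space (M i)" "\<And>i. i \<in> I \<Longrightarrow> prob_space (N i)"
  shows "distr \<pi> (M i \<Otimes>\<^sub>M N i) (\<lambda>z. (fst z i, snd z i)) \<in> couplings (M i) (N i)"
proof -
  have \<pi>: "prob_space \<pi>" "sets \<pi> = sets (PiM I M \<Otimes>\<^sub>M PiM I N)"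
    "distr \<pi> (PiM I M) fst = PiM I M" "distr \<pi> (PiM I N) snd = PiM I N"
    using assms(1) unfolding couplings_def by auto
  have [measurable]: "(\<lambda>z. fst z i) \<in> \<pi> \<rightarrow>\<^sub>M M i" "(\<lambda>z. snd z i) \<in> \<pi> \<rightarrow>\<^sub>M N i"
    unfolding measurable_cong_sets[OF \<pi>(2) refl] using assms(2) by measurable
  have "distr \<pi> (M i) (\<lambda>z. fst z i) = distr (distr \<pi> (PiM I M) fst) (M i) (\<lambda>x. x i)"
    "distr \<pi> (N i) (\<lambda>z. snd z i) = distr (distr \<pi> (PiM I N) snd) (N i) (\<lambda>x. x i)"
    using assms(2) by (subst distr_distr; simp add: measurable_cong_sets[OF \<pi>(2) refl] comp_def)+
  then have "distr \<pi> (M i) (\<lambda>z. fst z i) = M i" "distr \<pi> (N i) (\<lambda>z. snd z i) = N i"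
    using assms(2-4) by (simp_all add: \<pi>(3,4) distr_PiM_component)
  then show ?thesis
    unfolding couplings_def using \<pi>(1)
    by (auto simp: distr_distr comp_def intro: prob_space.prob_space_distr)
qed

lemma nn_integral_PiM_component:
  assumes "\<And>j. j \<in> I \<Longrightarrow> prob_space (M j)" "i \<in> I" "h \<in> borel_measurable (M i)"
  shows "(\<integral>\<^sup>+ z. h (z i) \<partial>PiM I M) = (\<integral>\<^sup>+ w. h w \<partial>M i)"
proof -
  have "(\<integral>\<^sup>+ w. h w \<partial>M i) = (\<integral>\<^sup>+ w. h w \<partial>distr (PiM I M) (M i) (\<lambda>z. z i))"
    by (simp add: distr_PiM_component assms)
  also have "\<dots> = (\<integral>\<^sup>+ z. h (z i) \<partial>PiM I M)"
    using assms(2,3) by (intro nn_integral_distr) auto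
  finally show ?thesis ..
qed

lemma eucl_dist_eq_L2_set: "eucl_dist n x y = L2_set (\<lambda>i. x i - y i) {..<n}"
  by (simp add: eucl_dist_def L2_set_def)

lemma abs_le_eucl_dist:
  assumes "i < n"
  shows "\<bar>x i - y i\<bar> \<le> eucl_dist n x y"
proof -
  have "eucl_dist n x y = L2_set (\<lambda>j. \<bar>x j - y j\<bar>) {..<n}"
    by (simp add: eucl_dist_def L2_set_def)
  then show ?thesis
    using member_le_L2_set[of "{..<n}" i "\<lambda>j. \<bar>x j - y j\<bar>"] assms by simp
qed

lemma measurable_eucl_dist [measurable]:
  assumes "\<And>i. i < n \<Longrightarrow> sets (M i) = sets borel" "\<And>i. i < n \<Longrightarrow> sets (N i) = sets borel"
  shows "(\<lambda>z. eucl_dist n (fst z) (snd z)) \<in> borel_measurable (PiM {..<n} M \<Otimes>\<^sub>M PiM {..<n} N)"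
proof -
  have [measurable_cong]: "sets (PiM {..<n} M \<Otimes>\<^sub>M PiM {..<n} N) = sets (PiM {..<n} (\<lambda>_. borel) \<Otimes>\<^sub>M PiM {..<n} (\<lambda>_. borel))"
    using assms by (intro sets_pair_measure_cong sets_PiM_cong) auto
  show ?thesis
    unfolding eucl_dist_def by measurable
qed

lemma sum_powr_le_card_powr:
  fixes a :: "'i \<Rightarrow> real"
  assumes "finite A" "\<And>i. i \<in> A \<Longrightarrow> a i \<ge> 0" "s > 0"
  shows "(\<Sum>i\<in>A. a i) powr s \<le> real (card A) powr s * (\<Sum>i\<in>A. a i powr s)"
proof -
  define m where "m = (\<Sum>i\<in>A. a i powr s) powr (1 / s)"
  have "a i \<le> m" if "i \<in> A" for i
  proof -
    have "a i = (a i powr s) powr (1 / s)"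
      using assms(2,3) that by (simp add: powr_powr)
    also have "\<dots> \<le> m"
      unfolding m_def using assms that by (intro powr_mono2 member_le_sum) auto
    finally show ?thesis .
  qed
  then have "(\<Sum>i\<in>A. a i) \<le> real (card A) * m"
    using sum_bounded_above[of A a m] by simp
  then have "(\<Sum>i\<in>A. a i) powr s \<le> (real (card A) * m) powr s"
    using assms by (intro powr_mono2 sum_nonneg) auto
  also have "\<dots> = real (card A) powr s * (\<Sum>i\<in>A. a i powr s)"
    using assms(3) by (simp add: m_def powr_mult powr_powr sum_nonneg)
  finally show ?thesis .
qed

context
  fixes n :: nat and \<nu> \<mu> :: "nat \<Rightarrow> real measure" and \<pi> :: "nat \<Rightarrow> (real \<times> real) measure"
  assumes couplings: "\<And>i. i < n \<Longrightarrow> \<pi> i \<in> couplings (\<nu> i) (\<mu> i)"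
    and real_prob: "\<And>i. i < n \<Longrightarrow> real_prob (\<nu> i)" "\<And>i. i < n \<Longrightarrow> real_prob (\<mu> i)"
begin

lemma transport_cost_prod_coupling:
  "transport_cost (eucl_dist n) s (prod_coupling {..<n} \<nu> \<mu> \<pi>)
    = (\<integral>\<^sup>+ z. ennreal (L2_set (\<lambda>i. fst (z i) - snd (z i)) {..<n} powr s) \<partial>PiM {..<n} \<pi>)"
proof -
  have "sets (\<pi> i) = sets (\<nu> i \<Otimes>\<^sub>M \<mu> i)" if "i \<in> {..<n}" for i
    using couplings that by (simp add: couplings_def)
  moreover have "(\<lambda>z. eucl_dist n (fst z) (snd z)) \<in> borel_measurable (PiM {..<n} \<nu> \<Otimes>\<^sub>M PiM {..<n} \<mu>)"
    using real_prob by (intro measurable_eucl_dist) (auto simp: real_prob_def)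
  ultimately show ?thesis
    unfolding prod_coupling_def
    by (subst nn_integral_distr[OF measurable_unzip_PiM]) (auto simp: eucl_dist_eq_L2_set cong: L2_set_cong_simp intro!: nn_integral_cong)
qed

lemma measurable_prod_coupling_component [measurable]:
  assumes "i < n"
  shows "(\<lambda>z. ennreal (\<bar>fst (z i) - snd (z i)\<bar> powr s)) \<in> borel_measurable (PiM {..<n} \<pi>)"
proof -
  have [measurable_cong]: "sets (\<pi> i) = sets (borel \<Otimes>\<^sub>M borel)"
    using coupling_real_prob(2)[OF couplings real_prob] assms by simp
  have "(\<lambda>w. ennreal (\<bar>fst w - snd w\<bar> powr s)) \<in> borel_measurable (\<pi> i)"
    by measurable
  then show ?thesis
    using assms by (intro measurable_compose[OF measurable_component_singleton]) auto
qed

lemma nn_integral_prod_coupling_component: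
  assumes "i < n"
  shows "(\<integral>\<^sup>+ z. ennreal (\<bar>fst (z i) - snd (z i)\<bar> powr s) \<partial>PiM {..<n} \<pi>) = transport_cost (\<lambda>x y. \<bar>x - y\<bar>) s (\<pi> i)"
proof (rule nn_integral_PiM_component[where h = "\<lambda>w. ennreal (\<bar>fst w - snd w\<bar> powr s)"])
  show "prob_space (\<pi> j)" if "j \<in> {..<n}" for j
    using coupling_real_prob(1)[OF couplings real_prob] that by simp
  have [measurable_cong]: "sets (\<pi> i) = sets (borel \<Otimes>\<^sub>M borel)"
    using coupling_real_prob(2)[OF couplings real_prob] assms by simp
  show "(\<lambda>w. ennreal (\<bar>fst w - snd w\<bar> powr s)) \<in> borel_measurable (\<pi> i)"
    by measurable
qed (use assms in auto)

lemma transport_cost_2_prod_coupling: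
  "transport_cost (eucl_dist n) 2 (prod_coupling {..<n} \<nu> \<mu> \<pi>) = (\<Sum>i<n. transport_cost (\<lambda>x y. \<bar>x - y\<bar>) 2 (\<pi> i))"
proof -
  have "transport_cost (eucl_dist n) 2 (prod_coupling {..<n} \<nu> \<mu> \<pi>)
      = (\<integral>\<^sup>+ z. (\<Sum>i<n. ennreal (\<bar>fst (z i) - snd (z i)\<bar> powr 2)) \<partial>PiM {..<n} \<pi>)"
    unfolding transport_cost_prod_coupling by (intro nn_integral_cong) (simp add: L2_set_def sum_nonneg)
  also have "\<dots> = (\<Sum>i<n. \<integral>\<^sup>+ z. ennreal (\<bar>fst (z i) - snd (z i)\<bar> powr 2) \<partial>PiM {..<n} \<pi>)"
    by (intro nn_integral_sum measurable_prod_coupling_component) auto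
  also have "\<dots> = (\<Sum>i<n. transport_cost (\<lambda>x y. \<bar>x - y\<bar>) 2 (\<pi> i))"
    by (intro sum.cong refl nn_integral_prod_coupling_component) simp
  finally show ?thesis .
qed

lemma transport_cost_prod_coupling_finite:
  assumes "s > 0" "\<And>i. i < n \<Longrightarrow> transport_cost (\<lambda>x y. \<bar>x - y\<bar>) s (\<pi> i) < \<infinity>"
  shows "transport_cost (eucl_dist n) s (prod_coupling {..<n} \<nu> \<mu> \<pi>) < \<infinity>"
proof -
  have "transport_cost (eucl_dist n) s (prod_coupling {..<n} \<nu> \<mu> \<pi>)
      \<le> (\<integral>\<^sup>+ z. ennreal (real n powr s) * (\<Sum>i<n. ennreal (\<bar>fst (z i) - snd (z i)\<bar> powr s)) \<partial>PiM {..<n} \<pi>)"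
    unfolding transport_cost_prod_coupling
  proof (intro nn_integral_mono)
    fix z :: "nat \<Rightarrow> real \<times> real"
    have "L2_set (\<lambda>i. fst (z i) - snd (z i)) {..<n} powr s \<le> (\<Sum>i<n. \<bar>fst (z i) - snd (z i)\<bar>) powr s"
      using assms(1) by (intro powr_mono2 L2_set_le_sum_abs) auto
    also have "\<dots> \<le> real n powr s * (\<Sum>i<n. \<bar>fst (z i) - snd (z i)\<bar> powr s)"
      using sum_powr_le_card_powr[of "{..<n}" "\<lambda>i. \<bar>fst (z i) - snd (z i)\<bar>" s] assms(1) by simp
    finally show "ennreal (L2_set (\<lambda>i. fst (z i) - snd (z i)) {..<n} powr s)
        \<le> ennreal (real n powr s) * (\<Sum>i<n. ennreal (\<bar>fst (z i) - snd (z i)\<bar> powr s))"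
      by (simp add: ennreal_mult'[symmetric] ennreal_leI)
  qed
  also have "\<dots> = ennreal (real n powr s) * (\<Sum>i<n. \<integral>\<^sup>+ z. ennreal (\<bar>fst (z i) - snd (z i)\<bar> powr s) \<partial>PiM {..<n} \<pi>)"
  proof -
    have components: "(\<lambda>z. ennreal (\<bar>fst (z i) - snd (z i)\<bar> powr s)) \<in> borel_measurable (PiM {..<n} \<pi>)"
      if "i \<in> {..<n}" for i
      using that by (intro measurable_prod_coupling_component) simp
    then have "(\<lambda>z. \<Sum>i<n. ennreal (\<bar>fst (z i) - snd (z i)\<bar> powr s)) \<in> borel_measurable (PiM {..<n} \<pi>)"
      by (rule borel_measurable_sum)
    then show ?thesis
      by (simp only: nn_integral_cmult nn_integral_sum[OF components])
  qed
  also have "\<dots> = ennreal (real n powr s) * (\<Sum>i<n. transport_cost (\<lambda>x y. \<bar>x - y\<bar>) s (\<pi> i))"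
    by (simp add: nn_integral_prod_coupling_component)
  also have "\<dots> < \<infinity>"
    using assms(2) by (simp add: ennreal_mult_less_top)
  finally show ?thesis .
qed

end

lemma INF_eucl_transport_cost_finite:
  assumes "\<And>i. i < n \<Longrightarrow> real_prob (\<nu> i) \<and> finite_moment s (\<nu> i)"
    "\<And>i. i < n \<Longrightarrow> real_prob (\<mu> i) \<and> finite_moment s (\<mu> i)" "s > 0"
  shows "(INF \<pi> \<in> couplings (PiM {..<n} \<nu>) (PiM {..<n} \<mu>). transport_cost (eucl_dist n) s \<pi>) < \<infinity>"
proof -
  let ?P = "prod_coupling {..<n} \<nu> \<mu> (\<lambda>i. quantile_coupling (\<nu> i) (\<mu> i))"
  have quantile: "quantile_coupling (\<nu> i) (\<mu> i) \<in> couplings (\<nu> i) (\<mu> i)" if "i < n" for i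
    using assms that by (simp add: quantile_coupling_in_couplings)
  have "?P \<in> couplings (PiM {..<n} \<nu>) (PiM {..<n} \<mu>)"
    using quantile by (intro prod_coupling_in_couplings) auto
  moreover have "transport_cost (eucl_dist n) s ?P < \<infinity>"
  proof (rule transport_cost_prod_coupling_finite)
    show "transport_cost (\<lambda>x y. \<bar>x - y\<bar>) s (quantile_coupling (\<nu> i) (\<mu> i)) < \<infinity>" if "i < n" for i
      using assms that by (intro transport_cost_finite_if_finite_moments[OF quantile]) auto
  qed (use assms quantile in auto)
  ultimately show ?thesis
    by (meson INF_lower order.strict_trans1)
qed

text \<open>The finiteness hypothesis is needed because \<^const>\<open>enn2real\<close> sends \<open>\<infinity>\<close> to \<open>0\<close>.\<close>

lemma W_real_le_W_eucl:
  assumes "i < n" "s > 0" "\<And>i. i < n \<Longrightarrow> real_prob (\<nu> i)" "\<And>i. i < n \<Longrightarrow> real_prob (\<mu> i)"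
    and "(INF \<pi> \<in> couplings (PiM {..<n} \<nu>) (PiM {..<n} \<mu>). transport_cost (eucl_dist n) s \<pi>) < \<infinity>"
  shows "W_real s (\<nu> i) (\<mu> i) \<le> W_eucl n s (PiM {..<n} \<nu>) (PiM {..<n} \<mu>)"
  unfolding W_real_def W_eucl_def wasserstein_def
proof (intro powr_mono2 enn2real_mono INF_greatest)
  fix P assume P: "P \<in> couplings (PiM {..<n} \<nu>) (PiM {..<n} \<mu>)"
  have [measurable]: "(\<lambda>z. (fst z i, snd z i)) \<in> P \<rightarrow>\<^sub>M \<nu> i \<Otimes>\<^sub>M \<mu> i"
  proof -
    have "sets P = sets (PiM {..<n} \<nu> \<Otimes>\<^sub>M PiM {..<n} \<mu>)" "i \<in> {..<n}"
      using P assms(1) by (simp_all add: couplings_def)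
    then show ?thesis
      unfolding measurable_cong_sets[OF \<open>sets P = _\<close> refl] by measurable
  qed
  have [measurable_cong]: "sets (\<nu> i) = sets borel" "sets (\<mu> i) = sets borel"
    using assms(1,3,4) by (simp_all add: real_prob_def)
  let ?\<pi> = "distr P (\<nu> i \<Otimes>\<^sub>M \<mu> i) (\<lambda>z. (fst z i, snd z i))"
  have "?\<pi> \<in> couplings (\<nu> i) (\<mu> i)"
    using P assms by (intro coupling_component) (auto simp: real_prob_def)
  then have "(INF \<pi> \<in> couplings (\<nu> i) (\<mu> i). transport_cost (\<lambda>x y. \<bar>x - y\<bar>) s \<pi>)
      \<le> transport_cost (\<lambda>x y. \<bar>x - y\<bar>) s ?\<pi>"
    by (rule INF_lower)
  also have "\<dots> = (\<integral>\<^sup>+ z. ennreal (\<bar>fst z i - snd z i\<bar> powr s) \<partial>P)"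
    by (subst nn_integral_distr) auto
  also have "\<dots> \<le> transport_cost (eucl_dist n) s P"
    using assms(1,2) by (intro nn_integral_mono ennreal_leI powr_mono2 abs_le_eucl_dist) auto
  finally show "(INF \<pi> \<in> couplings (\<nu> i) (\<mu> i). transport_cost (\<lambda>x y. \<bar>x - y\<bar>) s \<pi>)
      \<le> transport_cost (eucl_dist n) s P" .
qed (use assms in auto)

lemma W_eucl_2_squared_le_sum:
  assumes "\<And>i. i < n \<Longrightarrow> real_prob (\<nu> i) \<and> finite_moment 2 (\<nu> i)"
    "\<And>i. i < n \<Longrightarrow> real_prob (\<mu> i) \<and> finite_moment 2 (\<mu> i)"
  shows "(W_eucl n 2 (PiM {..<n} \<nu>) (PiM {..<n} \<mu>))\<^sup>2 \<le> (\<Sum>i<n. (W_real 2 (\<nu> i) (\<mu> i))\<^sup>2)"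
proof -
  define \<pi> where "\<pi> i = quantile_coupling (\<nu> i) (\<mu> i)" for i
  let ?P = "prod_coupling {..<n} \<nu> \<mu> \<pi>"
  let ?cost = "\<lambda>i. transport_cost (\<lambda>x y. \<bar>x - y\<bar>) 2 (\<pi> i)"
  have \<pi>: "\<pi> i \<in> couplings (\<nu> i) (\<mu> i)" if "i < n" for i
    using assms that by (simp add: \<pi>_def quantile_coupling_in_couplings)
  have finite: "?cost i < \<infinity>" if "i < n" for i
    using assms that by (intro transport_cost_finite_if_finite_moments[OF \<pi>]) auto
  have P_cost: "transport_cost (eucl_dist n) 2 ?P = (\<Sum>i<n. ?cost i)"
    using \<pi> assms by (intro transport_cost_2_prod_coupling) auto
  have "W_eucl n 2 (PiM {..<n} \<nu>) (PiM {..<n} \<mu>) \<le> enn2real (transport_cost (eucl_dist n) 2 ?P) powr (1 / 2)"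
    unfolding W_eucl_def using \<pi> finite
    by (intro wasserstein_le_transport_cost prod_coupling_in_couplings) (auto simp: P_cost)
  then have "(W_eucl n 2 (PiM {..<n} \<nu>) (PiM {..<n} \<mu>))\<^sup>2
      \<le> (enn2real (transport_cost (eucl_dist n) 2 ?P) powr (1 / 2))\<^sup>2"
    by (intro power_mono W_eucl_nonneg)
  also have "\<dots> = enn2real (\<Sum>i<n. ?cost i)"
    by (simp add: powr_half_sqrt P_cost del: power2_abs)
  also have "\<dots> = (\<Sum>i<n. enn2real (?cost i))"
    using finite by (subst enn2real_sum) auto
  also have "\<dots> = (\<Sum>i<n. (W_real 2 (\<nu> i) (\<mu> i))\<^sup>2)"
    using assms by (intro sum.cong refl) (simp add: \<pi>_def W_real_eq_quantile_coupling powr_half_sqrt)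
  finally show ?thesis .
qed

lemma W_eucl_2_squared_le:
  assumes q: "q > 1" and pq: "1 / p + 1 / q = 1" and r: "r = (2 - 1 / q) * p"
    and "\<And>i. i < n \<Longrightarrow> real_prob (\<nu> i) \<and> finite_moment r (\<nu> i)"
    and "\<And>i. i < n \<Longrightarrow> real_prob (\<mu> i) \<and> finite_moment r (\<mu> i)"
  shows "(W_eucl n 2 (PiM {..<n} \<nu>) (PiM {..<n} \<mu>))\<^sup>2
    \<le> real n * W_eucl n 1 (PiM {..<n} \<nu>) (PiM {..<n} \<mu>) powr (1 / q) * W_eucl n r (PiM {..<n} \<nu>) (PiM {..<n} \<mu>) powr (2 - 1 / q)"
proof -
  let ?W = "\<lambda>s. W_eucl n s (PiM {..<n} \<nu>) (PiM {..<n} \<mu>)"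
  have "r > 2" "1 / q \<le> 2"
    using interpolation_exponent_gt_2[OF q pq r] q by (auto simp: field_simps)
  have moments: "finite_moment s (\<nu> i)" "finite_moment s (\<mu> i)" if "i < n" "0 \<le> s" "s \<le> r" for i s
    using assms(4,5)[OF that(1)] that(2,3) finite_moment_mono by blast+
  have W_le: "W_real s (\<nu> i) (\<mu> i) \<le> ?W s" if "i < n" "s \<in> {1, r}" for i s
    using that assms(4,5) \<open>r > 2\<close> moments
    by (intro W_real_le_W_eucl INF_eucl_transport_cost_finite) auto
  have "(?W 2)\<^sup>2 \<le> (\<Sum>i<n. (W_real 2 (\<nu> i) (\<mu> i))\<^sup>2)"
    using assms(4,5) moments \<open>r > 2\<close> by (intro W_eucl_2_squared_le_sum) auto
  also have "\<dots> \<le> (\<Sum>i<n. ?W 1 powr (1 / q) * ?W r powr (2 - 1 / q))"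
  proof (intro sum_mono order.trans[OF W_real_2_squared_le[OF q pq r]])
    fix i assume "i \<in> {..<n}"
    then show "W_real 1 (\<nu> i) (\<mu> i) powr (1 / q) * W_real r (\<nu> i) (\<mu> i) powr (2 - 1 / q)
        \<le> ?W 1 powr (1 / q) * ?W r powr (2 - 1 / q)"
      using q \<open>1 / q \<le> 2\<close> W_le by (intro mult_mono powr_mono2) (auto simp: W_real_nonneg)
  qed (use assms(4,5) in auto)
  finally show ?thesis
    by (simp add: mult.assoc)
qed

theorem lemma6p9:
  fixes q p r :: real
  assumes "q > 1" and "1 / p + 1 / q = 1" and "r = (2 - 1 / q) * p"
  shows "(\<forall>\<nu> \<mu>. real_prob \<nu> \<and> real_prob \<mu> \<and> finite_moment r \<nu> \<and> finite_moment r \<mu> \<longrightarrow>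
            W_real 2 \<nu> \<mu> \<le> W_real 1 \<nu> \<mu> powr (1 / (2 * q)) * W_real r \<nu> \<mu> powr (1 - 1 / (2 * q)))
       \<and> (\<forall>n::nat. \<exists>c::real. \<forall>\<nu> \<mu> :: nat \<Rightarrow> real measure.
            (\<forall>i<n. real_prob (\<nu> i) \<and> real_prob (\<mu> i) \<and> finite_moment r (\<nu> i) \<and> finite_moment r (\<mu> i)) \<longrightarrow>
            W_eucl n 2 (PiM {..<n} \<nu>) (PiM {..<n} \<mu>)
              \<le> c * W_eucl n 1 (PiM {..<n} \<nu>) (PiM {..<n} \<mu>) powr (1 / (2 * q))
                  * W_eucl n r (PiM {..<n} \<nu>) (PiM {..<n} \<mu>) powr (1 - 1 / (2 * q)))"
proof (intro conjI allI impI exI)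
  fix \<nu> \<mu> :: "real measure"
  assume "real_prob \<nu> \<and> real_prob \<mu> \<and> finite_moment r \<nu> \<and> finite_moment r \<mu>"
  then have squared: "(W_real 2 \<nu> \<mu>)\<^sup>2 \<le> 1 * W_real 1 \<nu> \<mu> powr (1 / q) * W_real r \<nu> \<mu> powr (2 - 1 / q)"
    using W_real_2_squared_le[OF assms] by simp
  show "W_real 2 \<nu> \<mu> \<le> W_real 1 \<nu> \<mu> powr (1 / (2 * q)) * W_real r \<nu> \<mu> powr (1 - 1 / (2 * q))"
    using sqrt_interpolation_bound[OF W_real_nonneg W_real_nonneg W_real_nonneg _ _ squared] assms(1) by simp
next
  fix n :: nat and \<nu> \<mu> :: "nat \<Rightarrow> real measure"
  assume "\<forall>i<n. real_prob (\<nu> i) \<and> real_prob (\<mu> i) \<and> finite_moment r (\<nu> i) \<and> finite_moment r (\<mu> i)"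
  then have "(W_eucl n 2 (PiM {..<n} \<nu>) (PiM {..<n} \<mu>))\<^sup>2 \<le> real n * W_eucl n 1 (PiM {..<n} \<nu>) (PiM {..<n} \<mu>) powr (1 / q)
      * W_eucl n r (PiM {..<n} \<nu>) (PiM {..<n} \<mu>) powr (2 - 1 / q)"
    by (intro W_eucl_2_squared_le[OF assms]) auto
  then show "W_eucl n 2 (PiM {..<n} \<nu>) (PiM {..<n} \<mu>)
      \<le> sqrt (real n) * W_eucl n 1 (PiM {..<n} \<nu>) (PiM {..<n} \<mu>) powr (1 / (2 * q))
        * W_eucl n r (PiM {..<n} \<nu>) (PiM {..<n} \<mu>) powr (1 - 1 / (2 * q))"
    using assms(1) by (intro sqrt_interpolation_bound W_eucl_nonneg) auto
qed

end
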